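(* Let $\eta\geq 1$ and let $(\phi_n)_{n\in\mathbb N}$ be a family of real univariate polynomials with $\phi_n$ of degree $n$ for every $n$. Let $(\alpha^{m,n}_k)_{k,m,n\in\mathbb N}$ be its linearization coefficients, i.e. the real numbers with $\phi_m\phi_n=\sum_{k=0}^{m+n}\alpha^{m,n}_k\phi_k$ and $\alpha^{m,n}_k=0$ for $k>m+n$, and assume $$\sum_{k=0}^{m+n}\vert\alpha^{m,n}_k\vert = 1\qquad\text{for all } m,n\in\mathbb N.$$ Then for any $x,y\in\ell^1_\eta(\mathbb N,\mathbb C)$, the generalized convolution product $x\ast y$ defined by $(x\ast y)_k=\sum_{m=0}^\infty\sum_{n=0}^\infty x_m y_n\alpha^{m,n}_k$ ($k\in\mathbb N$) is well defined, belongs to $\ell^1_\eta(\mathbb N,\mathbb C)$, and $$\Vert x\ast y\Vert_{\ell^1_\eta}\leq \Vert x\Vert_{\ell^1_\eta}\Vert y\Vert_{\ell^1_\eta};$$ that is, $\ell^1_\eta(\mathbb N,\mathbb C)$ is a Banach algebra for $\ast$.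
   Context: For $\eta\geq1$, $\ell^1_\eta(\mathbb N,\mathbb C)$ denotes the space of complex sequences $x=(x_n)_{n\in\mathbb N}$ with $\Vert x\Vert_{\ell^1_\eta}:=\sum_{n\in\mathbb N}\vert x_n\vert\eta^n<\infty$. *)

theory Defs
  imports "HOL-Analysis.Analysis" "HOL-Computational_Algebra.Polynomial"
begin

definition in_ell1 :: "real \<Rightarrow> (nat \<Rightarrow> complex) \<Rightarrow> bool" where
  "in_ell1 \<eta> x \<longleftrightarrow> summable (\<lambda>n. norm (x n) * \<eta> ^ n)"

definition ell1_norm :: "real \<Rightarrow> (nat \<Rightarrow> complex) \<Rightarrow> real" where
  "ell1_norm \<eta> x = (\<Sum>n. norm (x n) * \<eta> ^ n)"

definition gconv :: "(nat \<Rightarrow> nat \<Rightarrow> nat \<Rightarrow> real) \<Rightarrow> (nat \<Rightarrow> complex) \<Rightarrow> (nat \<Rightarrow> complex) \<Rightarrow> nat \<Rightarrow> complex" where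
  "gconv \<alpha> x y k = (\<Sum>m. \<Sum>n. x m * y n * complex_of_real (\<alpha> m n k))"

end

theory Submission
  imports Defs
begin

text \<open>
  The triple series \<open>\<Sum>\<^sub>k \<Sum>\<^sub>m \<Sum>\<^sub>n |x\<^sub>m| |y\<^sub>n| |\<alpha>\<^sup>m\<^sup>,\<^sup>n\<^sub>k| \<eta>\<^sup>k\<close> majorises everything.
  Summing first over \<open>k\<close>: since \<open>\<alpha>\<^sup>m\<^sup>,\<^sup>n\<^sub>k = 0\<close> for \<open>k > m + n\<close> and \<open>\<eta> \<ge> 1\<close>, the inner sum is
  at most \<open>|x\<^sub>m| \<eta>\<^sup>m |y\<^sub>n| \<eta>\<^sup>n\<close>, so the whole series converges with sum at most
  \<open>\<parallel>x\<parallel> \<parallel>y\<parallel>\<close>. For fixed \<open>k\<close> it dominates the double series defining \<open>(x \<ast> y)\<^sub>k\<close>, which is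
  therefore absolutely convergent (so its iterated and unordered sums agree), and
  \<open>|(x \<ast> y)\<^sub>k| \<eta>\<^sup>k\<close> is bounded by the \<open>k\<close>-th slice of the majorant.
\<close>

lemma has_sum_product_nonneg:
  fixes a :: "'i \<Rightarrow> real" and b :: "'j \<Rightarrow> real"
  assumes "(a has_sum A) I" "(b has_sum B) J" "\<And>i. a i \<ge> 0" "\<And>j. b j \<ge> 0"
  shows "((\<lambda>(i, j). a i * b j) has_sum A * B) (I \<times> J)"
proof -
  have rows: "((\<lambda>j. a i * b j) has_sum a i * B) J" for i
    using has_sum_cmult_right[OF assms(2)] .
  have cols: "((\<lambda>i. a i * B) has_sum A * B) I"
    using has_sum_cmult_left[OF assms(1)] .
  have summable: "(\<lambda>(i, j). a i * b j) summable_on I \<times> J"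
    using rows cols assms(3,4) by (intro summable_on_SigmaI) (auto simp: summable_on_def)
  show ?thesis
    using has_sum_SigmaI[OF _ cols summable] rows by simp
qed

lemma ell1_norm_has_sum:
  assumes "\<eta> \<ge> 0" "in_ell1 \<eta> x"
  shows "((\<lambda>n. norm (x n) * \<eta> ^ n) has_sum ell1_norm \<eta> x) UNIV"
  using assms unfolding in_ell1_def ell1_norm_def
  by (intro sums_nonneg_imp_has_sum summable_sums) auto

lemma in_ell1_dominated:
  assumes "\<eta> \<ge> 0" "(h has_sum H) UNIV" "\<And>n. norm (z n) * \<eta> ^ n \<le> h n"
  shows "in_ell1 \<eta> z" and "ell1_norm \<eta> z \<le> H"
proof -
  have "(\<lambda>n. norm (z n) * \<eta> ^ n) summable_on UNIV"
    using assms by (intro summable_on_comparison_test[OF has_sum_imp_summable]) auto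
  then show "in_ell1 \<eta> z"
    unfolding in_ell1_def by (rule summable_on_imp_summable)
  then show "ell1_norm \<eta> z \<le> H"
    using assms by (intro has_sum_mono[OF ell1_norm_has_sum assms(2)]) auto
qed

lemma weighted_abs_sum_le_power:
  fixes \<eta> :: real
  assumes "\<eta> \<ge> 1" "(\<Sum>k=0..N. \<bar>a k\<bar>) \<le> 1"
  shows "(\<Sum>k=0..N. \<bar>a k\<bar> * \<eta> ^ k) \<le> \<eta> ^ N"
proof -
  have "(\<Sum>k=0..N. \<bar>a k\<bar> * \<eta> ^ k) \<le> (\<Sum>k=0..N. \<bar>a k\<bar> * \<eta> ^ N)"
    using assms(1) by (intro sum_mono mult_left_mono power_increasing) auto
  also have "\<dots> = (\<Sum>k=0..N. \<bar>a k\<bar>) * \<eta> ^ N"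
    by (simp add: sum_distrib_right)
  also have "\<dots> \<le> \<eta> ^ N"
    using assms by (intro mult_left_le_one_le) auto
  finally show ?thesis .
qed

lemma iterated_suminf_eq_infsum:
  fixes f :: "nat \<Rightarrow> nat \<Rightarrow> 'a::banach"
  assumes "(\<lambda>(m, n). f m n) summable_on UNIV"
  shows "\<forall>m. summable (f m)" and "summable (\<lambda>m. \<Sum>n. f m n)"
    and "(\<Sum>m. \<Sum>n. f m n) = (\<Sum>\<^sub>\<infinity>(m, n). f m n)"
proof -
  have infsum_eq_suminf: "infsum g UNIV = suminf g" if "g summable_on UNIV" for g :: "nat \<Rightarrow> 'a"
    using sums_unique[OF has_sum_imp_sums[OF has_sum_infsum[OF that]]] by simp
  have Sigma: "(\<lambda>(m, n). f m n) summable_on Sigma UNIV (\<lambda>_. UNIV)"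
    using assms by simp
  have rows: "f m summable_on UNIV" for m
  proof -
    have "(\<lambda>(m, n). f m n) summable_on range (Pair m)"
      using assms by (rule summable_on_subset_banach) auto
    then show ?thesis
      by (subst (asm) summable_on_reindex) (auto simp: o_def inj_on_def)
  qed
  then show "\<forall>m. summable (f m)"
    by (simp add: summable_on_imp_summable)
  have "(\<lambda>m. infsum (f m) UNIV) summable_on UNIV"
    using summable_on_Sigma_banach[OF Sigma] by simp
  then have outer: "(\<lambda>m. \<Sum>n. f m n) summable_on UNIV"
    by (simp add: infsum_eq_suminf[OF rows])
  then show "summable (\<lambda>m. \<Sum>n. f m n)"
    by (rule summable_on_imp_summable)
  have "(\<Sum>m. \<Sum>n. f m n) = (\<Sum>\<^sub>\<infinity>m. \<Sum>\<^sub>\<infinity>n. f m n)"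
    using infsum_eq_suminf[OF outer] by (simp add: infsum_eq_suminf[OF rows])
  also have "\<dots> = (\<Sum>\<^sub>\<infinity>(m, n). f m n)"
    using infsum_Sigma'_banach[OF Sigma] by simp
  finally show "(\<Sum>m. \<Sum>n. f m n) = (\<Sum>\<^sub>\<infinity>(m, n). f m n)" .
qed

lemma gconv_majorant_summable:
  fixes \<alpha> :: "nat \<Rightarrow> nat \<Rightarrow> nat \<Rightarrow> real" and x y :: "nat \<Rightarrow> complex"
  assumes eta: "\<eta> \<ge> 1"
    and vanish: "\<And>m n k. k > m + n \<Longrightarrow> \<alpha> m n k = 0"
    and abs_sum: "\<And>m n. (\<Sum>k=0..m+n. \<bar>\<alpha> m n k\<bar>) \<le> 1"
    and x: "in_ell1 \<eta> x" and y: "in_ell1 \<eta> y"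
  defines "T \<equiv> \<lambda>(k, m, n). norm (x m) * norm (y n) * \<bar>\<alpha> m n k\<bar> * \<eta> ^ k"
  shows "T summable_on UNIV" and "infsum T UNIV \<le> ell1_norm \<eta> x * ell1_norm \<eta> y"
proof -
  define T' where "T' = (\<lambda>((m, n), k). T (k, m, n))"
  define g where "g = (\<lambda>(m, n). norm (x m) * norm (y n) * (\<Sum>k=0..m+n. \<bar>\<alpha> m n k\<bar> * \<eta> ^ k))"
  have T'_nonneg: "T' q \<ge> 0" for q
    using eta by (auto simp: T'_def T_def split: prod.splits)
  have slices: "((\<lambda>k. T' (p, k)) has_sum g p) UNIV" for p
    by (cases p, rule has_sum_finite_neutralI[of "{0..fst p + snd p}"])
       (auto simp: T'_def T_def g_def vanish sum_distrib_left mult_ac)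
  have g_le: "g (m, n) \<le> (norm (x m) * \<eta> ^ m) * (norm (y n) * \<eta> ^ n)" for m n
  proof -
    have "g (m, n) \<le> norm (x m) * norm (y n) * \<eta> ^ (m + n)"
      unfolding g_def using weighted_abs_sum_le_power[OF eta abs_sum]
      by (simp add: mult_left_mono)
    then show ?thesis
      by (simp add: power_add mult_ac)
  qed
  have g_nonneg: "g p \<ge> 0" for p
    using slices[of p] T'_nonneg by (rule has_sum_nonneg)
  have product: "((\<lambda>(m, n). (norm (x m) * \<eta> ^ m) * (norm (y n) * \<eta> ^ n))
                  has_sum ell1_norm \<eta> x * ell1_norm \<eta> y) UNIV"
    using has_sum_product_nonneg[OF ell1_norm_has_sum ell1_norm_has_sum] eta x y by simp
  have "g summable_on UNIV"
    using g_le g_nonneg by (intro summable_on_comparison_test[OF has_sum_imp_summable[OF product]]) auto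
  then have "T' summable_on UNIV \<times> UNIV"
    using slices T'_nonneg by (intro summable_on_SigmaI) auto
  then have T'_sum: "(T' has_sum infsum g UNIV) (UNIV \<times> UNIV)"
    by (intro has_sum_SigmaI[OF slices] has_sum_infsum) (simp_all add: \<open>g summable_on UNIV\<close>)
  then have "(T has_sum infsum g UNIV) (UNIV \<times> UNIV)"
    unfolding T'_def by (subst has_sum_swap) (simp add: case_prod_unfold)
  then have T_sum: "(T has_sum infsum g UNIV) UNIV"
    by simp
  then show "T summable_on UNIV"
    by (rule has_sum_imp_summable)
  have "infsum g UNIV \<le> ell1_norm \<eta> x * ell1_norm \<eta> y"
    using g_le by (intro has_sum_mono[OF has_sum_infsum product]) (auto simp: \<open>g summable_on UNIV\<close>)
  then show "infsum T UNIV \<le> ell1_norm \<eta> x * ell1_norm \<eta> y"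
    using T_sum by (simp add: infsumI)
qed

lemma gconv_coeff_dominated:
  fixes \<alpha> :: "nat \<Rightarrow> nat \<Rightarrow> nat \<Rightarrow> real" and x y :: "nat \<Rightarrow> complex"
  assumes eta: "\<eta> \<ge> 1"
    and majorant: "(\<lambda>(m, n). norm (x m) * norm (y n) * \<bar>\<alpha> m n k\<bar> * \<eta> ^ k) summable_on UNIV"
  shows "(\<lambda>(m, n). x m * y n * complex_of_real (\<alpha> m n k)) summable_on UNIV"
    and "\<forall>m. summable (\<lambda>n. x m * y n * complex_of_real (\<alpha> m n k))"
    and "summable (\<lambda>m. \<Sum>n. x m * y n * complex_of_real (\<alpha> m n k))"
    and "gconv \<alpha> x y k = (\<Sum>\<^sub>\<infinity>(m, n). x m * y n * complex_of_real (\<alpha> m n k))"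
    and "norm (gconv \<alpha> x y k) * \<eta> ^ k \<le> (\<Sum>\<^sub>\<infinity>(m, n). norm (x m) * norm (y n) * \<bar>\<alpha> m n k\<bar> * \<eta> ^ k)"
proof -
  define c where "c = (\<lambda>(m, n). x m * y n * complex_of_real (\<alpha> m n k))"
  have c_norm: "norm (c p) * \<eta> ^ k = (\<lambda>(m, n). norm (x m) * norm (y n) * \<bar>\<alpha> m n k\<bar> * \<eta> ^ k) p" for p
    by (simp add: c_def norm_mult split: prod.splits)
  have c_abs: "(\<lambda>p. norm (c p)) summable_on UNIV"
  proof (rule summable_on_comparison_test[OF majorant])
    show "norm (c p) \<le> (\<lambda>(m, n). norm (x m) * norm (y n) * \<bar>\<alpha> m n k\<bar> * \<eta> ^ k) p" for p
      using mult_left_mono[OF one_le_power[OF eta], of "norm (c p)" k] c_norm[of p] by simp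
  qed simp
  then have "c summable_on UNIV"
    by (rule abs_summable_summable)
  then show "(\<lambda>(m, n). x m * y n * complex_of_real (\<alpha> m n k)) summable_on UNIV"
    and "\<forall>m. summable (\<lambda>n. x m * y n * complex_of_real (\<alpha> m n k))"
    and "summable (\<lambda>m. \<Sum>n. x m * y n * complex_of_real (\<alpha> m n k))"
    and gconv: "gconv \<alpha> x y k = (\<Sum>\<^sub>\<infinity>(m, n). x m * y n * complex_of_real (\<alpha> m n k))"
    using iterated_suminf_eq_infsum[of "\<lambda>m n. x m * y n * complex_of_real (\<alpha> m n k)"]
    by (simp_all add: c_def gconv_def)
  have "norm (gconv \<alpha> x y k) * \<eta> ^ k \<le> (\<Sum>\<^sub>\<infinity>p. norm (c p)) * \<eta> ^ k"
    using norm_infsum_bound[OF c_abs] eta by (intro mult_right_mono) (simp_all add: gconv c_def)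
  also have "\<dots> = (\<Sum>\<^sub>\<infinity>(m, n). norm (x m) * norm (y n) * \<bar>\<alpha> m n k\<bar> * \<eta> ^ k)"
    by (simp add: infsum_cmult_left'[symmetric] c_norm)
  finally show "norm (gconv \<alpha> x y k) * \<eta> ^ k
      \<le> (\<Sum>\<^sub>\<infinity>(m, n). norm (x m) * norm (y n) * \<bar>\<alpha> m n k\<bar> * \<eta> ^ k)" .
qed

theorem lemma2p9:
  fixes \<eta> :: real and \<phi> :: "nat \<Rightarrow> real poly" and \<alpha> :: "nat \<Rightarrow> nat \<Rightarrow> nat \<Rightarrow> real"
    and x y :: "nat \<Rightarrow> complex"
  assumes eta: "\<eta> \<ge> 1"
    and deg: "\<And>n. degree (\<phi> n) = n"
    and lin: "\<And>m n. \<phi> m * \<phi> n = (\<Sum>k=0..m+n. smult (\<alpha> m n k) (\<phi> k))"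
    and zero: "\<And>m n k. k > m + n \<Longrightarrow> \<alpha> m n k = 0"
    and one: "\<And>m n. (\<Sum>k=0..m+n. \<bar>\<alpha> m n k\<bar>) = 1"
    and x: "in_ell1 \<eta> x" and y: "in_ell1 \<eta> y"
  shows "(\<forall>k. (\<lambda>(m, n). x m * y n * complex_of_real (\<alpha> m n k)) summable_on UNIV
            \<and> (\<forall>m. summable (\<lambda>n. x m * y n * complex_of_real (\<alpha> m n k)))
            \<and> summable (\<lambda>m. \<Sum>n. x m * y n * complex_of_real (\<alpha> m n k))
            \<and> gconv \<alpha> x y k = (\<Sum>\<^sub>\<infinity>(m, n). x m * y n * complex_of_real (\<alpha> m n k)))
         \<and> in_ell1 \<eta> (gconv \<alpha> x y)
         \<and> ell1_norm \<eta> (gconv \<alpha> x y) \<le> ell1_norm \<eta> x * ell1_norm \<eta> y"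
proof -
  define M where "M k = (\<lambda>(m, n). norm (x m) * norm (y n) * \<bar>\<alpha> m n k\<bar> * \<eta> ^ k)" for k
  have M: "(\<lambda>(k, p). M k p) summable_on UNIV"
      "(\<Sum>\<^sub>\<infinity>(k, p). M k p) \<le> ell1_norm \<eta> x * ell1_norm \<eta> y"
    using gconv_majorant_summable[OF eta zero _ x y] one unfolding M_def by simp_all
  have slice: "M k summable_on UNIV" for k
    using summable_on_SigmaD1[of M UNIV "\<lambda>_. UNIV"] M(1) by simp
  have slices_sum: "((\<lambda>k. infsum (M k) UNIV) has_sum (\<Sum>\<^sub>\<infinity>(k, p). M k p)) UNIV"
  proof -
    have "((\<lambda>(k, p). M k p) has_sum (\<Sum>\<^sub>\<infinity>(k, p). M k p)) (UNIV \<times> UNIV)"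
      using has_sum_infsum[OF M(1)] by simp
    then show ?thesis
      by (rule has_sum_Sigma') (simp add: has_sum_infsum[OF slice])
  qed
  note coeff = gconv_coeff_dominated[where \<alpha> = \<alpha>, OF eta slice[unfolded M_def]]
  have ell1: "in_ell1 \<eta> (gconv \<alpha> x y)" "ell1_norm \<eta> (gconv \<alpha> x y) \<le> (\<Sum>\<^sub>\<infinity>(k, p). M k p)"
    using in_ell1_dominated[OF _ slices_sum] coeff(5) eta by (simp_all add: M_def)
  show ?thesis
    using coeff(1-4) ell1(1) order_trans[OF ell1(2) M(2)] by simp
qed

end
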